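(* Let $A\subset\mathbb{R}^p$ be compact with $\mathcal{H}_d(A)<\infty$, and let $B\subset A\setminus\mathrm{clos}(A^c_{\rm bi})$ be nonempty and open relative to $A$. For every $\varepsilon>0$ there exists a pairwise disjoint collection $\mathcal{X}_\varepsilon=\{Q_\alpha\}$ of closed sets $Q_\alpha=B[x_\alpha,\rho_\alpha]\cap A$ such that $\mathcal{H}_d(B\setminus\bigcup_{Q_\alpha\in\mathcal{X}_\varepsilon}Q_\alpha)=0$, and such that for each $\alpha$: $\rho_\alpha<\varepsilon$, and there is a bi-Lipschitz map $\varphi_\alpha$ with constant $1+\varepsilon$ mapping $Q_\alpha$ onto $\tilde Q_\alpha:=\varphi_\alpha(Q_\alpha)\subset\mathbb{R}^d$ with $\mathcal{L}_d(\partial\tilde Q_\alpha)=0$ and $\tilde Q_\alpha\supset B[\varphi_\alpha(x_\alpha),\rho_\alpha/(1+\varepsilon)]$. Moreover, for every $\varepsilon>0$ and $\gamma>0$ there is a finite subcollection $\mathcal{X}_{\varepsilon,\gamma}\subset\mathcal{X}_\varepsilon$ with $\mathcal{H}_d(B\setminus\bigcup_{Q_\alpha\in\mathcal{X}_{\varepsilon,\gamma}}Q_\alpha)<\gamma$.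
   Context: $\mathcal{H}_d$ is $d$-dimensional Hausdorff measure; $B[x,r]$ is the closed ball; $\mathcal{L}_d$ is Lebesgue measure on $\mathbb{R}^d$. A map $\varphi$ is bi-Lipschitz with constant $C$ if $C^{-1}|x-y|\le|\varphi(x)-\varphi(y)|\le C|x-y|$. $A$ is $d$-bi-Lipschitz at $x\in A$ if for every $\varepsilon>0$ there are $\delta>0$ and a bi-Lipschitz $\varphi:B(x,\delta)\cap A\to\mathbb{R}^d$ with constant $1+\varepsilon$ whose image is open in $\mathbb{R}^d$; $A_{\rm bi}$ is the set of such $x$, and $A^c_{\rm bi}=A\setminus A_{\rm bi}$. *)

theory Defs
  imports "HOL-Analysis.Analysis"
begin

definition hausdorff_pre :: "nat \<Rightarrow> real \<Rightarrow> 'a::metric_space set \<Rightarrow> ennreal" where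
  "hausdorff_pre d \<delta> E =
     (INF C \<in> {C :: nat \<Rightarrow> 'a set. E \<subseteq> (\<Union>i. C i) \<and> (\<forall>i. bounded (C i) \<and> diameter (C i) \<le> \<delta>)}.
        (\<Sum>i. ennreal (unit_ball_vol (real d) * (diameter (C i) / 2) ^ d)))"

definition hausdorff_measure :: "nat \<Rightarrow> 'a::metric_space set \<Rightarrow> ennreal" where
  "hausdorff_measure d E = (SUP \<delta> \<in> {0<..}. hausdorff_pre d \<delta> E)"

definition bilipschitz_on :: "real \<Rightarrow> 'a::metric_space set \<Rightarrow> ('a \<Rightarrow> 'b::metric_space) \<Rightarrow> bool" where
  "bilipschitz_on C S f \<longleftrightarrow>
     (\<forall>x\<in>S. \<forall>y\<in>S. dist x y / C \<le> dist (f x) (f y) \<and> dist (f x) (f y) \<le> C * dist x y)"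

text \<open>A is d-bi-Lipschitz at x, where d = DIM('d) is the dimension of the target space 'd.\<close>
definition bi_lipschitz_point ::
    "'d::euclidean_space itself \<Rightarrow> 'p::euclidean_space set \<Rightarrow> 'p \<Rightarrow> bool" where
  "bi_lipschitz_point TYPE('d) A x \<longleftrightarrow>
     x \<in> A \<and> (\<forall>\<epsilon>>0. \<exists>\<delta>>0. \<exists>\<phi> :: 'p \<Rightarrow> 'd.
        bilipschitz_on (1 + \<epsilon>) (ball x \<delta> \<inter> A) \<phi> \<and> open (\<phi> ` (ball x \<delta> \<inter> A)))"

definition A_bi :: "'d::euclidean_space itself \<Rightarrow> 'p::euclidean_space set \<Rightarrow> 'p set" where
  "A_bi TYPE('d) A = {x \<in> A. bi_lipschitz_point TYPE('d) A x}"

definition A_bi_c :: "'d::euclidean_space itself \<Rightarrow> 'p::euclidean_space set \<Rightarrow> 'p set" where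
  "A_bi_c TYPE('d) A = A - A_bi TYPE('d) A"

end

theory Submission
  imports Defs
begin

text \<open>Near a point of \<open>B\<close> the set \<open>A\<close> is, up to distortion \<open>1 + \<epsilon>\<close>, an open subset of \<open>\<real>\<^sup>d\<close>, and since
  \<open>H\<^sub>d(A) < \<infinity>\<close> all but countably many spheres about a point meet \<open>A\<close> in an \<open>H\<^sub>d\<close>-null set. Hence
  every point of \<open>B\<close> is the centre of arbitrarily small cells \<open>Q = B[x,\<rho>] \<inter> A\<close> with a \<open>(1 + \<epsilon>)\<close>-bi-Lipschitz
  chart whose image contains \<open>B[\<phi> x, \<rho>/(1 + \<epsilon>)]\<close> and has Lebesgue-null frontier (it lies in the image
  of \<open>A \<inter> sphere x \<rho>\<close>). Comparing with balls in the chart, the cells are doubling: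
  \<open>H\<^sub>d(B[x,5\<rho>] \<inter> A) \<le> 120\<^sup>d H\<^sub>d(Q)\<close>. Vitali's covering lemma yields a disjoint subfamily whose 5-fold
  enlargements cover whatever a finite part of it misses; the cells being disjoint subsets of \<open>A\<close>,
  their measures are summable, so by doubling the uncovered part of \<open>B\<close> has arbitrarily small measure.\<close>

section \<open>Hausdorff measure\<close>

definition hausdorff_gauge :: "nat \<Rightarrow> 'a::metric_space set \<Rightarrow> ennreal" where
  "hausdorff_gauge d S = ennreal (unit_ball_vol (real d) * (diameter S / 2) ^ d)"

definition delta_covers :: "real \<Rightarrow> 'a::metric_space set \<Rightarrow> (nat \<Rightarrow> 'a set) set" where
  "delta_covers \<delta> E = {C. E \<subseteq> (\<Union>i. C i) \<and> (\<forall>i. bounded (C i) \<and> diameter (C i) \<le> \<delta>)}"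

lemma hausdorff_pre_eq_INF:
  "hausdorff_pre d \<delta> E = (INF C \<in> delta_covers \<delta> E. \<Sum>i. hausdorff_gauge d (C i))"
  by (simp add: hausdorff_pre_def delta_covers_def hausdorff_gauge_def)

lemma hausdorff_pre_le_cover:
  "C \<in> delta_covers \<delta> E \<Longrightarrow> hausdorff_pre d \<delta> E \<le> (\<Sum>i. hausdorff_gauge d (C i))"
  unfolding hausdorff_pre_eq_INF by (rule INF_lower)

lemma hausdorff_pre_less_obtains_cover:
  assumes "hausdorff_pre d \<delta> E < x"
  obtains C where "C \<in> delta_covers \<delta> E" "(\<Sum>i. hausdorff_gauge d (C i)) < x"
  using assms unfolding hausdorff_pre_eq_INF by (auto simp: INF_less_iff)

lemma hausdorff_gauge_empty: "0 < d \<Longrightarrow> hausdorff_gauge d {} = 0"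
  by (simp add: hausdorff_gauge_def power_0_left)

lemma hausdorff_pre_mono:
  assumes "E \<subseteq> F" "\<delta> \<le> \<delta>'"
  shows "hausdorff_pre d \<delta>' E \<le> hausdorff_pre d \<delta> F"
proof -
  have "delta_covers \<delta> F \<subseteq> delta_covers \<delta>' E"
    using assms by (auto simp: delta_covers_def) (meson order_trans)+
  then show ?thesis
    unfolding hausdorff_pre_eq_INF by (rule INF_superset_mono) auto
qed

lemma hausdorff_pre_le_hausdorff_measure:
  "0 < \<delta> \<Longrightarrow> hausdorff_pre d \<delta> E \<le> hausdorff_measure d E"
  unfolding hausdorff_measure_def by (rule SUP_upper) auto

lemma hausdorff_measure_le_iff:
  "hausdorff_measure d E \<le> x \<longleftrightarrow> (\<forall>\<delta>>0. hausdorff_pre d \<delta> E \<le> x)"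
  unfolding hausdorff_measure_def by (auto simp: SUP_le_iff)

lemma hausdorff_measure_mono:
  "E \<subseteq> F \<Longrightarrow> hausdorff_measure d E \<le> hausdorff_measure d F"
  unfolding hausdorff_measure_le_iff
  by (meson hausdorff_pre_le_hausdorff_measure hausdorff_pre_mono order_refl order_trans)

lemma hausdorff_measure_empty:
  "0 < d \<Longrightarrow> hausdorff_measure d ({} :: 'a::metric_space set) = 0"
proof -
  assume "0 < d"
  have "hausdorff_pre d \<delta> ({} :: 'a set) \<le> 0" if "0 < \<delta>" for \<delta>
    using hausdorff_pre_le_cover[of "\<lambda>_. {}" \<delta> "{}" d] that \<open>0 < d\<close>
    by (simp add: delta_covers_def hausdorff_gauge_empty)
  then show ?thesis
    using hausdorff_measure_le_iff[of d "{} :: 'a set" 0] by simp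
qed

text \<open>Glue near-optimal covers of the sets \<open>E n\<close>, with slack \<open>e/2^(n+1)\<close>, along \<open>prod_decode\<close>.\<close>

lemma hausdorff_pre_countable_subadditive:
  "hausdorff_pre d \<delta> (\<Union>n. E n) \<le> (\<Sum>n. hausdorff_pre d \<delta> (E n))"
proof (rule ennreal_le_epsilon)
  fix e :: real assume "0 < e" "(\<Sum>n. hausdorff_pre d \<delta> (E n)) < top"
  then have "hausdorff_pre d \<delta> (E n) < hausdorff_pre d \<delta> (E n) + e * (1/2) ^ Suc n" for n
    by (auto simp: less_top dest!: ennreal_suminf_lessD)
  then have "\<exists>C. C \<in> delta_covers \<delta> (E n) \<and>
               (\<Sum>i. hausdorff_gauge d (C i)) \<le> hausdorff_pre d \<delta> (E n) + e * (1/2) ^ Suc n" for n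
    by (metis hausdorff_pre_less_obtains_cover less_imp_le)
  then obtain B where B: "\<And>n. B n \<in> delta_covers \<delta> (E n)"
    and B_le: "\<And>n. (\<Sum>i. hausdorff_gauge d (B n i)) \<le> hausdorff_pre d \<delta> (E n) + e * (1/2) ^ Suc n"
    by metis
  define C where "C = case_prod B \<circ> prod_decode"
  have "C \<in> delta_covers \<delta> (\<Union>n. E n)"
    using B unfolding delta_covers_def C_def
    by (auto simp: subset_eq split: prod.splits) (metis prod.case prod_encode_inverse)
  then have "hausdorff_pre d \<delta> (\<Union>n. E n) \<le> (\<Sum>i. hausdorff_gauge d (C i))"
    by (rule hausdorff_pre_le_cover)
  also have "\<dots> = (\<Sum>n. \<Sum>i. hausdorff_gauge d (B n i))"
    unfolding C_def comp_def by (intro suminf_ennreal_2dimen) auto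
  also have "\<dots> \<le> (\<Sum>n. hausdorff_pre d \<delta> (E n) + e * (1/2) ^ Suc n)"
    by (intro suminf_le allI B_le) auto
  also have "\<dots> = (\<Sum>n. hausdorff_pre d \<delta> (E n)) + (\<Sum>n. ennreal e * ennreal ((1/2) ^ Suc n))"
    using \<open>0 < e\<close> by (subst suminf_add[symmetric])
      (auto simp del: ennreal_suminf_cmult simp add: ennreal_mult[symmetric])
  also have "\<dots> = (\<Sum>n. hausdorff_pre d \<delta> (E n)) + e"
    unfolding ennreal_suminf_cmult
    by (subst suminf_ennreal_eq[OF zero_le_power power_half_series]) auto
  finally show "hausdorff_pre d \<delta> (\<Union>n. E n) \<le> (\<Sum>n. hausdorff_pre d \<delta> (E n)) + e" .
qed

lemma hausdorff_measure_countable_subadditive: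
  "hausdorff_measure d (\<Union>n. E n) \<le> (\<Sum>n. hausdorff_measure d (E n))"
  unfolding hausdorff_measure_le_iff
proof safe
  fix \<delta> :: real assume "0 < \<delta>"
  have "hausdorff_pre d \<delta> (\<Union>n. E n) \<le> (\<Sum>n. hausdorff_pre d \<delta> (E n))"
    by (rule hausdorff_pre_countable_subadditive)
  also have "\<dots> \<le> (\<Sum>n. hausdorff_measure d (E n))"
    by (intro suminf_le allI hausdorff_pre_le_hausdorff_measure \<open>0 < \<delta>\<close>) auto
  finally show "hausdorff_pre d \<delta> (\<Union>n. E n) \<le> (\<Sum>n. hausdorff_measure d (E n))" .
qed

lemma diameter_le_dist:
  fixes S :: "'a::metric_space set"
  assumes "0 \<le> D" "\<And>x y. x \<in> S \<Longrightarrow> y \<in> S \<Longrightarrow> dist x y \<le> D"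
  shows "diameter S \<le> D"
  using assms unfolding diameter_def by (auto intro!: cSUP_least)

lemma lipschitz_image_bounded_diameter:
  assumes f: "L-lipschitz_on E f" and C: "bounded C"
  shows "bounded (f ` (C \<inter> E))" "diameter (f ` (C \<inter> E)) \<le> L * diameter C"
proof -
  have bound: "dist (f x) (f y) \<le> L * diameter C" if "x \<in> C \<inter> E" "y \<in> C \<inter> E" for x y
    using lipschitz_onD[OF f, of x y] that lipschitz_on_nonneg[OF f]
      mult_left_mono[OF diameter_bounded_bound[OF C, of x y], of L]
    by auto
  show "bounded (f ` (C \<inter> E))"
    unfolding bounded_def using bound by blast
  show "diameter (f ` (C \<inter> E)) \<le> L * diameter C"
    using bound lipschitz_on_nonneg[OF f] diameter_ge_0[OF C]
    by (intro diameter_le_dist) auto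
qed

lemma hausdorff_gauge_lipschitz_image:
  assumes f: "L-lipschitz_on E f" and C: "bounded C"
  shows "hausdorff_gauge d (f ` (C \<inter> E)) \<le> ennreal (L ^ d) * hausdorff_gauge d C"
proof -
  note D = lipschitz_image_bounded_diameter[OF f C]
  have L: "0 \<le> L" by (rule lipschitz_on_nonneg[OF f])
  have "(diameter (f ` (C \<inter> E)) / 2) ^ d \<le> (L * diameter C / 2) ^ d"
    using D diameter_ge_0[OF D(1)] by (intro power_mono) auto
  also have "\<dots> = L ^ d * (diameter C / 2) ^ d"
    by (simp add: power_mult_distrib[symmetric])
  finally have "unit_ball_vol (real d) * (diameter (f ` (C \<inter> E)) / 2) ^ d
      \<le> L ^ d * (unit_ball_vol (real d) * (diameter C / 2) ^ d)"
    by (simp add: power_mult_distrib mult_left_mono mult.left_commute)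
  then show ?thesis
    unfolding hausdorff_gauge_def using L diameter_ge_0[OF C]
    by (simp add: ennreal_mult[symmetric] ennreal_leI)
qed

lemma hausdorff_pre_lipschitz_image:
  assumes L: "0 < L" and f: "L-lipschitz_on E f"
  shows "hausdorff_pre d (L * \<delta>) (f ` E) \<le> ennreal (L ^ d) * hausdorff_pre d \<delta> E"
proof -
  have cover: "hausdorff_pre d (L * \<delta>) (f ` E) \<le> ennreal (L ^ d) * (\<Sum>i. hausdorff_gauge d (C i))"
    if C: "C \<in> delta_covers \<delta> E" for C
  proof -
    define D where "D i = f ` (C i \<inter> E)" for i
    have "bounded (C i)" "diameter (C i) \<le> \<delta>" for i
      using C by (auto simp: delta_covers_def)
    then have "D \<in> delta_covers (L * \<delta>) (f ` E)"
      using C lipschitz_image_bounded_diameter[OF f] L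
      by (fastforce simp: delta_covers_def D_def intro: order_trans mult_left_mono)
    then have "hausdorff_pre d (L * \<delta>) (f ` E) \<le> (\<Sum>i. hausdorff_gauge d (D i))"
      by (rule hausdorff_pre_le_cover)
    also have "\<dots> \<le> (\<Sum>i. ennreal (L ^ d) * hausdorff_gauge d (C i))"
      using C unfolding D_def delta_covers_def
      by (intro suminf_le allI hausdorff_gauge_lipschitz_image[OF f]) auto
    finally show ?thesis by simp
  qed
  show ?thesis
  proof (cases "hausdorff_pre d \<delta> E = top")
    case False
    show ?thesis
    proof (rule ennreal_le_epsilon)
      fix e :: real assume e: "0 < e"
      have "hausdorff_pre d \<delta> E < hausdorff_pre d \<delta> E + e / L ^ d"
        using False e L by (simp add: less_top ennreal_less_iff)
      then obtain C where C: "C \<in> delta_covers \<delta> E"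
        "(\<Sum>i. hausdorff_gauge d (C i)) < hausdorff_pre d \<delta> E + e / L ^ d"
        by (rule hausdorff_pre_less_obtains_cover)
      have "hausdorff_pre d (L * \<delta>) (f ` E) \<le> ennreal (L ^ d) * (hausdorff_pre d \<delta> E + e / L ^ d)"
        using cover[OF C(1)] C(2) by (meson less_imp_le mult_left_mono order_trans zero_le)
      also have "\<dots> = ennreal (L ^ d) * hausdorff_pre d \<delta> E + e"
        using L e by (simp add: distrib_left ennreal_mult[symmetric])
      finally show "hausdorff_pre d (L * \<delta>) (f ` E) \<le> ennreal (L ^ d) * hausdorff_pre d \<delta> E + e" .
    qed
  qed (use L in \<open>simp add: ennreal_mult_top\<close>)
qed

lemma hausdorff_measure_lipschitz_image:
  assumes L: "0 < L" and f: "L-lipschitz_on E f"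
  shows "hausdorff_measure d (f ` E) \<le> ennreal (L ^ d) * hausdorff_measure d E"
  unfolding hausdorff_measure_le_iff
proof safe
  fix \<delta> :: real assume "0 < \<delta>"
  have "hausdorff_pre d \<delta> (f ` E) = hausdorff_pre d (L * (\<delta> / L)) (f ` E)"
    using L by simp
  also have "\<dots> \<le> ennreal (L ^ d) * hausdorff_pre d (\<delta> / L) E"
    by (rule hausdorff_pre_lipschitz_image[OF L f])
  also have "\<dots> \<le> ennreal (L ^ d) * hausdorff_measure d E"
    using \<open>0 < \<delta>\<close> L by (intro mult_left_mono hausdorff_pre_le_hausdorff_measure) auto
  finally show "hausdorff_pre d \<delta> (f ` E) \<le> ennreal (L ^ d) * hausdorff_measure d E" .
qed

text \<open>A cover by sets of diameter below the separation \<open>r\<close> splits into a cover of \<open>E\<close> and one of \<open>F\<close>.\<close>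

lemma hausdorff_pre_separated_add:
  assumes d: "0 < d" and r: "0 < \<delta>" "\<delta> < r"
    and sep: "\<And>x y. x \<in> E \<Longrightarrow> y \<in> F \<Longrightarrow> r \<le> dist x y"
  shows "hausdorff_pre d \<delta> E + hausdorff_pre d \<delta> F \<le> hausdorff_pre d \<delta> (E \<union> F)"
proof (cases "hausdorff_pre d \<delta> (E \<union> F) = top")
  case False
  show ?thesis
  proof (rule ennreal_le_epsilon)
    fix e :: real assume e: "0 < e"
    have "hausdorff_pre d \<delta> (E \<union> F) < hausdorff_pre d \<delta> (E \<union> F) + e"
      using False e by (simp add: less_top ennreal_less_iff)
    then obtain C where C: "C \<in> delta_covers \<delta> (E \<union> F)"
      "(\<Sum>i. hausdorff_gauge d (C i)) < hausdorff_pre d \<delta> (E \<union> F) + e"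
      by (rule hausdorff_pre_less_obtains_cover)
    define CE where "CE i = (if C i \<inter> E = {} then {} else C i)" for i
    define CF where "CF i = (if C i \<inter> F = {} then {} else C i)" for i
    have CE: "CE \<in> delta_covers \<delta> E" and CF: "CF \<in> delta_covers \<delta> F"
      using C(1) r unfolding delta_covers_def CE_def CF_def by (auto simp: subset_eq) blast+
    have split: "hausdorff_gauge d (CE i) + hausdorff_gauge d (CF i) \<le> hausdorff_gauge d (C i)" for i
    proof (cases "C i \<inter> E = {} \<or> C i \<inter> F = {}")
      case True
      then show ?thesis unfolding CE_def CF_def using d by (auto simp: hausdorff_gauge_empty)
    next
      case False
      then obtain x y where xy: "x \<in> C i" "x \<in> E" "y \<in> C i" "y \<in> F" by auto
      have "bounded (C i)" "diameter (C i) \<le> \<delta>"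
        using C(1) by (auto simp: delta_covers_def)
      then have "dist x y \<le> \<delta>"
        using diameter_bounded_bound[of "C i" x y] xy by fastforce
      then show ?thesis using sep[OF xy(2,4)] r by auto
    qed
    have "hausdorff_pre d \<delta> E + hausdorff_pre d \<delta> F
        \<le> (\<Sum>i. hausdorff_gauge d (CE i)) + (\<Sum>i. hausdorff_gauge d (CF i))"
      by (intro add_mono hausdorff_pre_le_cover CE CF)
    also have "\<dots> = (\<Sum>i. hausdorff_gauge d (CE i) + hausdorff_gauge d (CF i))"
      by (rule suminf_add) auto
    also have "\<dots> \<le> (\<Sum>i. hausdorff_gauge d (C i))"
      by (intro suminf_le allI split) auto
    finally show "hausdorff_pre d \<delta> E + hausdorff_pre d \<delta> F \<le> hausdorff_pre d \<delta> (E \<union> F) + e"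
      using C(2) by simp
  qed
qed simp

lemma hausdorff_measure_separated_add:
  assumes d: "0 < d" and r: "0 < r"
    and sep: "\<And>x y. x \<in> E \<Longrightarrow> y \<in> F \<Longrightarrow> r \<le> dist x y"
  shows "hausdorff_measure d E + hausdorff_measure d F \<le> hausdorff_measure d (E \<union> F)"
proof -
  have ne: "{0::real<..} \<noteq> {}" by auto
  have "hausdorff_measure d E + hausdorff_measure d F
      = (SUP \<delta>2\<in>{0<..}. SUP \<delta>1\<in>{0<..}. hausdorff_pre d \<delta>1 E + hausdorff_pre d \<delta>2 F)"
    unfolding hausdorff_measure_def
    by (simp add: ennreal_SUP_add_left[OF ne, symmetric] ennreal_SUP_add_right[OF ne])
  also have "\<dots> \<le> hausdorff_measure d (E \<union> F)"
  proof (intro SUP_least)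
    fix \<delta>1 \<delta>2 :: real assume "\<delta>1 \<in> {0<..}" "\<delta>2 \<in> {0<..}"
    define \<delta> where "\<delta> = min (min \<delta>1 \<delta>2) (r / 2)"
    have \<delta>: "0 < \<delta>" "\<delta> < r" "\<delta> \<le> \<delta>1" "\<delta> \<le> \<delta>2"
      using \<open>\<delta>1 \<in> _\<close> \<open>\<delta>2 \<in> _\<close> r by (auto simp: \<delta>_def)
    have "hausdorff_pre d \<delta>1 E + hausdorff_pre d \<delta>2 F \<le> hausdorff_pre d \<delta> E + hausdorff_pre d \<delta> F"
      using \<delta> by (intro add_mono hausdorff_pre_mono) auto
    also have "\<dots> \<le> hausdorff_pre d \<delta> (E \<union> F)"
      by (rule hausdorff_pre_separated_add[OF d \<delta>(1,2) sep])
    also have "\<dots> \<le> hausdorff_measure d (E \<union> F)"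
      by (rule hausdorff_pre_le_hausdorff_measure[OF \<delta>(1)])
    finally show "hausdorff_pre d \<delta>1 E + hausdorff_pre d \<delta>2 F \<le> hausdorff_measure d (E \<union> F)" .
  qed
  finally show ?thesis .
qed

lemma hausdorff_measure_sum_disjoint_compact_le:
  fixes Q :: "'i \<Rightarrow> 'a::heine_borel set"
  assumes d: "0 < d" and "finite I" and "\<And>i. i \<in> I \<Longrightarrow> compact (Q i)"
    and "disjoint_family_on Q I"
  shows "(\<Sum>i\<in>I. hausdorff_measure d (Q i)) \<le> hausdorff_measure d (\<Union>i\<in>I. Q i)"
  using assms(2-)
proof (induction I rule: finite_induct)
  case (insert j I)
  then have "compact (Q j)" "compact (\<Union>i\<in>I. Q i)" "Q j \<inter> (\<Union>i\<in>I. Q i) = {}"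
    by (auto simp: disjoint_family_on_def)
  then obtain r where "0 < r" "\<And>x y. x \<in> Q j \<Longrightarrow> y \<in> (\<Union>i\<in>I. Q i) \<Longrightarrow> r \<le> dist x y"
    using separate_compact_closed[of "Q j" "\<Union>i\<in>I. Q i"] compact_imp_closed by metis
  note separated = this
  have "(\<Sum>i\<in>insert j I. hausdorff_measure d (Q i))
      \<le> hausdorff_measure d (Q j) + hausdorff_measure d (\<Union>i\<in>I. Q i)"
    using insert by (auto intro: add_left_mono disjoint_family_on_mono)
  also have "\<dots> \<le> hausdorff_measure d (Q j \<union> (\<Union>i\<in>I. Q i))"
    using separated by (rule hausdorff_measure_separated_add[OF d])
  finally show ?case by simp
qed simp

lemma hausdorff_measure_suminf_disjoint_compact_le:
  fixes Q :: "nat \<Rightarrow> 'a::heine_borel set"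
  assumes "0 < d" "\<And>n. compact (Q n)" "disjoint_family Q" "\<And>n. Q n \<subseteq> S"
  shows "(\<Sum>n. hausdorff_measure d (Q n)) \<le> hausdorff_measure d S"
proof (rule suminf_le_const[OF summableI])
  fix N
  have "(\<Sum>n<N. hausdorff_measure d (Q n)) \<le> hausdorff_measure d (\<Union>n<N. Q n)"
    using assms by (intro hausdorff_measure_sum_disjoint_compact_le)
      (auto intro: disjoint_family_on_mono)
  also have "\<dots> \<le> hausdorff_measure d S"
    using assms(4) by (intro hausdorff_measure_mono) auto
  finally show "(\<Sum>n<N. hausdorff_measure d (Q n)) \<le> hausdorff_measure d S" .
qed

lemma delta_cover_obtains_cball_cover:
  fixes E :: "'a::euclidean_space set"
  assumes C: "C \<in> delta_covers \<delta> E"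
  obtains T where "E \<subseteq> (\<Union>i. T i)" "\<And>i. T i \<in> sets lebesgue"
    "\<And>i. emeasure lebesgue (T i) \<le> ennreal (2 ^ DIM('a)) * hausdorff_gauge DIM('a) (C i)"
proof
  define T where
    "T i = (if C i \<inter> E = {} then {} else cball (SOME p. p \<in> C i \<inter> E) (diameter (C i)))" for i
  show "E \<subseteq> (\<Union>i. T i)"
  proof
    fix x assume "x \<in> E"
    then obtain i where "x \<in> C i" using C by (auto simp: delta_covers_def)
    let ?p = "SOME p. p \<in> C i \<inter> E"
    have p: "?p \<in> C i \<inter> E" using \<open>x \<in> C i\<close> \<open>x \<in> E\<close> by (metis IntI someI)
    have "dist ?p x \<le> diameter (C i)"
      using C p \<open>x \<in> C i\<close> by (auto simp: delta_covers_def intro!: diameter_bounded_bound)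
    then show "x \<in> (\<Union>i. T i)" using p \<open>x \<in> C i\<close> \<open>x \<in> E\<close> by (auto simp: T_def)
  qed
  show "T i \<in> sets lebesgue" for i
    by (auto simp: T_def intro: fmeasurableD)
  have "0 \<le> diameter (C i)" for i
    using C by (auto simp: delta_covers_def intro: diameter_ge_0)
  then show "emeasure lebesgue (T i) \<le> ennreal (2 ^ DIM('a)) * hausdorff_gauge DIM('a) (C i)" for i
    by (simp add: T_def emeasure_cball hausdorff_gauge_def power_divide ennreal_mult[symmetric])
qed

lemma negligible_if_hausdorff_measure_zero:
  fixes E :: "'a::euclidean_space set"
  assumes "hausdorff_measure DIM('a) E = 0"
  shows "negligible E"
  unfolding negligible_outer
proof safe
  fix e :: real assume e: "0 < e"
  let ?d = "DIM('a)"
  have "hausdorff_pre ?d 1 E < ennreal (e / 2 ^ ?d)"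
    using hausdorff_pre_le_hausdorff_measure[of 1 ?d E] assms e by simp
  then obtain C where C: "C \<in> delta_covers 1 E" "(\<Sum>i. hausdorff_gauge ?d (C i)) < ennreal (e / 2 ^ ?d)"
    by (rule hausdorff_pre_less_obtains_cover)
  obtain T :: "nat \<Rightarrow> 'a set" where T: "E \<subseteq> (\<Union>i. T i)" "\<And>i. T i \<in> sets lebesgue"
    "\<And>i. emeasure lebesgue (T i) \<le> ennreal (2 ^ ?d) * hausdorff_gauge ?d (C i)"
    using delta_cover_obtains_cball_cover[OF C(1)] by blast
  have "emeasure lebesgue (\<Union>i. T i) \<le> (\<Sum>i. emeasure lebesgue (T i))"
    using T(2) by (intro emeasure_subadditive_countably) auto
  also have "\<dots> \<le> (\<Sum>i. ennreal (2 ^ ?d) * hausdorff_gauge ?d (C i))"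
    by (intro suminf_le allI T(3)) auto
  also have "\<dots> = ennreal (2 ^ ?d) * (\<Sum>i. hausdorff_gauge ?d (C i))"
    by simp
  also have "\<dots> < ennreal (2 ^ ?d) * ennreal (e / 2 ^ ?d)"
    using C(2) by (intro ennreal_mult_strict_left_mono) auto
  also have "\<dots> = ennreal e"
    using e by (simp add: ennreal_mult[symmetric])
  finally have less: "emeasure lebesgue (\<Union>i. T i) < ennreal e" .
  then have T_fin: "(\<Union>i. T i) \<in> lmeasurable"
    using T(2) by (intro fmeasurableI) (auto simp: less_top[symmetric] intro: order.strict_trans)
  moreover have "measure lebesgue (\<Union>i. T i) < e"
    using less by (simp add: emeasure_eq_measure2[OF T_fin] ennreal_less_iff)
  ultimately show "\<exists>T. E \<subseteq> T \<and> T \<in> lmeasurable \<and> measure lebesgue T < e"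
    using T(1) by blast
qed

text \<open>Spheres about \<open>x\<close> are disjoint compact sets, so the finite sums of their measures are
  bounded by that of \<open>A\<close>; a real function with bounded finite sums has countable support.\<close>

lemma countable_radii_hausdorff_measure_sphere_nonzero:
  fixes A :: "'a::heine_borel set"
  assumes "closed A" "hausdorff_measure d A < \<infinity>" "0 < d"
  shows "countable {\<rho>. hausdorff_measure d (A \<inter> sphere x \<rho>) \<noteq> 0}"
proof -
  let ?H = "\<lambda>\<rho>. hausdorff_measure d (A \<inter> sphere x \<rho>)"
  have H_fin: "?H \<rho> < top" for \<rho>
    using hausdorff_measure_mono[of "A \<inter> sphere x \<rho>" A d] assms(2) by (simp add: le_less_trans)
  have compact_slice: "compact (A \<inter> sphere x \<rho>)" for \<rho>
  proof -
    have "A \<inter> sphere x \<rho> = (A \<inter> cball x \<rho>) - ball x \<rho>" by auto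
    then show ?thesis
      using assms(1) by (simp add: closed_Int_compact compact_diff)
  qed
  have "sum (enn2real \<circ> ?H) F \<le> enn2real (hausdorff_measure d A)" if "finite F" for F
  proof -
    have "sum ?H F \<le> hausdorff_measure d (\<Union>\<rho>\<in>F. A \<inter> sphere x \<rho>)"
      using that assms compact_slice by (intro hausdorff_measure_sum_disjoint_compact_le)
        (auto simp: disjoint_family_on_def)
    also have "\<dots> \<le> hausdorff_measure d A"
      by (intro hausdorff_measure_mono) auto
    finally have "enn2real (sum ?H F) \<le> enn2real (hausdorff_measure d A)"
      using enn2real_mono assms(2) by auto
    then show ?thesis
      using H_fin by (simp add: enn2real_sum)
  qed
  then have "(enn2real \<circ> ?H) summable_on UNIV"
    by (intro nonneg_bdd_above_summable_on) (auto simp: bdd_above_def)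
  then have "countable {\<rho>. (enn2real \<circ> ?H) \<rho> \<noteq> 0}"
    using summable_countable_real by fastforce
  moreover have "(enn2real \<circ> ?H) \<rho> \<noteq> 0 \<longleftrightarrow> ?H \<rho> \<noteq> 0" for \<rho>
    using H_fin[of \<rho>] by (auto simp: enn2real_eq_0_iff)
  ultimately show ?thesis by simp
qed

lemma exists_radius_hausdorff_measure_sphere_zero:
  fixes A :: "'a::heine_borel set"
  assumes "closed A" "hausdorff_measure d A < \<infinity>" "0 < d" "0 < b"
  shows "\<exists>\<rho>. 0 < \<rho> \<and> \<rho> < b \<and> hausdorff_measure d (A \<inter> sphere x \<rho>) = 0"
proof (rule ccontr)
  assume "\<not> ?thesis"
  then have "{0<..<b} \<subseteq> {\<rho>. hausdorff_measure d (A \<inter> sphere x \<rho>) \<noteq> 0}" by auto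
  then show False
    using countable_radii_hausdorff_measure_sphere_nonzero[OF assms(1-3)] countable_subset
      uncountable_open_interval assms(4) by metis
qed

lemma hausdorff_measure_cball_scale:
  fixes c :: "'a::real_normed_vector"
  assumes k: "0 < k"
  shows "hausdorff_measure d (cball c (k * s)) \<le> ennreal (k ^ d) * hausdorff_measure d (cball c s)"
proof -
  define g where "g y = c + k *\<^sub>R (y - c)" for y
  have "cball c (k * s) \<subseteq> g ` cball c s"
  proof
    fix y assume y: "y \<in> cball c (k * s)"
    have "dist c (c + (1/k) *\<^sub>R (y - c)) = dist c y / k"
      using k by (simp add: dist_norm norm_minus_commute)
    also have "\<dots> \<le> s"
      using y k by (simp add: divide_le_eq mult.commute)
    finally have "c + (1/k) *\<^sub>R (y - c) \<in> cball c s" by simp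
    moreover have "g (c + (1/k) *\<^sub>R (y - c)) = y"
      using k by (simp add: g_def)
    ultimately show "y \<in> g ` cball c s" by (metis image_eqI)
  qed
  moreover have "k-lipschitz_on (cball c s) g"
    using k by (intro lipschitz_onI) (auto simp: g_def dist_norm scaleR_diff_right[symmetric])
  ultimately show ?thesis
    by (meson hausdorff_measure_lipschitz_image hausdorff_measure_mono k order_trans)
qed

section \<open>Bi-Lipschitz charts\<close>

lemma bilipschitz_on_imp_lipschitz_on:
  "bilipschitz_on L S f \<Longrightarrow> 0 \<le> L \<Longrightarrow> L-lipschitz_on S f"
  by (simp add: bilipschitz_on_def lipschitz_on_def)

lemma bilipschitz_on_dist_le:
  "bilipschitz_on L S f \<Longrightarrow> 0 < L \<Longrightarrow> a \<in> S \<Longrightarrow> b \<in> S \<Longrightarrow> dist a b \<le> L * dist (f a) (f b)"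
  unfolding bilipschitz_on_def by (auto simp: field_simps)

lemma bilipschitz_on_mono:
  assumes f: "bilipschitz_on L S f" and "0 < L" "L \<le> L'" "T \<subseteq> S"
  shows "bilipschitz_on L' T f"
  unfolding bilipschitz_on_def
proof safe
  fix a b assume "a \<in> T" "b \<in> T"
  then have "dist a b / L \<le> dist (f a) (f b)" "dist (f a) (f b) \<le> L * dist a b"
    using f assms(4) by (auto simp: bilipschitz_on_def)
  moreover have "dist a b / L' \<le> dist a b / L" "L * dist a b \<le> L' * dist a b"
    using assms by (auto intro: divide_left_mono mult_right_mono)
  ultimately show "dist a b / L' \<le> dist (f a) (f b)" "dist (f a) (f b) \<le> L' * dist a b"
    by linarith+
qed

lemma hausdorff_measure_le_bilipschitz_image:
  assumes f: "bilipschitz_on L S f" and L: "0 < L" and "E \<subseteq> S"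
  shows "hausdorff_measure d E \<le> ennreal (L ^ d) * hausdorff_measure d (f ` E)"
proof -
  let ?g = "inv_into S f"
  have inj: "inj_on f S"
    unfolding inj_on_def using bilipschitz_on_dist_le[OF f L] by fastforce
  then have g_f: "?g (f z) = z" if "z \<in> S" for z
    using that by simp
  then have "?g ` f ` E = E"
    using \<open>E \<subseteq> S\<close> by (force simp: image_image)
  moreover have "L-lipschitz_on (f ` E) ?g"
    using L \<open>E \<subseteq> S\<close> g_f bilipschitz_on_dist_le[OF f L]
    by (intro lipschitz_onI) (auto simp: subset_eq)
  ultimately show ?thesis
    using hausdorff_measure_lipschitz_image[OF L, of "f ` E" ?g d] by simp
qed

lemma open_bilipschitz_image_ball:
  assumes f: "bilipschitz_on L (ball x \<delta> \<inter> A) f" and L: "0 < L"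
    and op: "open (f ` (ball x \<delta> \<inter> A))" and "r \<le> \<delta>"
  shows "open (f ` (ball x r \<inter> A))"
  unfolding open_contains_ball
proof
  fix y assume "y \<in> f ` (ball x r \<inter> A)"
  then obtain z where z: "z \<in> ball x r" "z \<in> A" "y = f z" by auto
  then have zU: "z \<in> ball x \<delta> \<inter> A" using \<open>r \<le> \<delta>\<close> by auto
  then obtain e where e: "0 < e" "ball y e \<subseteq> f ` (ball x \<delta> \<inter> A)"
    using op z(3) unfolding open_contains_ball by blast
  define e' where "e' = min e ((r - dist x z) / L)"
  have "0 < e'" using e z L by (auto simp: e'_def)
  moreover have "ball y e' \<subseteq> f ` (ball x r \<inter> A)"
  proof
    fix y' assume y': "y' \<in> ball y e'"
    then obtain z' where z': "z' \<in> ball x \<delta> \<inter> A" "y' = f z'"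
      using e by (auto simp: e'_def)
    have "dist z z' \<le> L * dist y y'"
      using bilipschitz_on_dist_le[OF f L zU z'(1)] z z' by simp
    also have "\<dots> < L * e'" using y' L by simp
    also have "\<dots> \<le> r - dist x z"
      using L mult_left_mono[of e' "(r - dist x z) / L" L] by (simp add: e'_def)
    finally have "dist x z' < r" using dist_triangle[of x z' z] by linarith
    then show "y' \<in> f ` (ball x r \<inter> A)" using z' by auto
  qed
  ultimately show "\<exists>e>0. ball y e \<subseteq> f ` (ball x r \<inter> A)" by blast
qed

text \<open>The chart is defined on \<open>ball x \<delta>\<close> with \<open>\<delta> > 5 r\<close>, so that it also sees the 5-fold enlargement
  of the cell \<open>cball x r \<inter> A\<close>; the bound \<open>L \<le> 2\<close> keeps the doubling constant explicit.\<close>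

locale bilipschitz_chart =
  fixes A :: "'p::heine_borel set" and \<phi> :: "'p \<Rightarrow> 'd::euclidean_space"
    and x :: 'p and L r \<delta> :: real
  assumes closed: "closed A" and centre: "x \<in> A"
    and L: "1 \<le> L" "L \<le> 2" and r: "0 < r" "5 * r < \<delta>"
    and bilipschitz: "bilipschitz_on L (ball x \<delta> \<inter> A) \<phi>"
    and open_image: "open (\<phi> ` (ball x \<delta> \<inter> A))"
begin

lemma cball_subset_domain: "cball x s \<inter> A \<subseteq> ball x \<delta> \<inter> A" if "s \<le> 5 * r"
  using that r by auto

lemma lipschitz: "L-lipschitz_on (ball x \<delta> \<inter> A) \<phi>"
  using bilipschitz L by (simp add: bilipschitz_on_imp_lipschitz_on)

lemma compact_image_cball: "compact (\<phi> ` (cball x r \<inter> A))"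
proof (rule compact_continuous_image)
  show "continuous_on (cball x r \<inter> A) \<phi>"
    using lipschitz_on_continuous_on[OF lipschitz] cball_subset_domain[of r] r
    by (auto intro: continuous_on_subset)
  show "compact (cball x r \<inter> A)"
    using closed by (intro compact_Int_closed) auto
qed

lemma open_image_ball: "open (\<phi> ` (ball x r \<inter> A))"
  using open_bilipschitz_image_ball[OF bilipschitz _ open_image] L r by auto

text \<open>The open set \<open>\<phi> ` (ball x r \<inter> A)\<close> lies in the interior of the image of the closed ball.\<close>

lemma frontier_image_cball_subset: "frontier (\<phi> ` (cball x r \<inter> A)) \<subseteq> \<phi> ` (A \<inter> sphere x r)"
proof
  let ?K = "\<phi> ` (cball x r \<inter> A)"
  fix y assume "y \<in> frontier ?K"
  then have "y \<in> ?K" "y \<notin> interior ?K"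
    using closure_closed[OF compact_imp_closed[OF compact_image_cball]] by (auto simp: frontier_def)
  moreover have "\<phi> ` (ball x r \<inter> A) \<subseteq> interior ?K"
    using open_image_ball by (intro interior_maximal) auto
  ultimately show "y \<in> \<phi> ` (A \<inter> sphere x r)"
    by (force simp: dist_commute)
qed

lemma emeasure_frontier_image_cball:
  assumes "hausdorff_measure DIM('d) (A \<inter> sphere x r) = 0"
  shows "emeasure lebesgue (frontier (\<phi> ` (cball x r \<inter> A))) = 0"
proof -
  have "L-lipschitz_on (A \<inter> sphere x r) \<phi>"
    using lipschitz cball_subset_domain[of r] r by (auto intro: lipschitz_on_subset)
  then have "hausdorff_measure DIM('d) (\<phi> ` (A \<inter> sphere x r))
      \<le> ennreal (L ^ DIM('d)) * hausdorff_measure DIM('d) (A \<inter> sphere x r)"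
    using L by (intro hausdorff_measure_lipschitz_image) auto
  then have "hausdorff_measure DIM('d) (\<phi> ` (A \<inter> sphere x r)) = 0"
    using assms by simp
  then have "negligible (frontier (\<phi> ` (cball x r \<inter> A)))"
    by (meson negligible_if_hausdorff_measure_zero negligible_subset frontier_image_cball_subset)
  then show ?thesis
    by (simp add: negligible_iff_null_sets null_setsD1)
qed

text \<open>A point of \<open>cball (\<phi> x) s\<close> outside \<open>\<phi> ` (ball x r \<inter> A)\<close> would, by connectedness, give a
  frontier point \<open>\<phi> z\<close> with \<open>dist x z \<ge> r\<close>; but \<open>dist x z \<le> L * s < r\<close>.\<close>

lemma cball_subset_image_cball:
  assumes "0 \<le> s" "s * L < r"
  shows "cball (\<phi> x) s \<subseteq> \<phi> ` (cball x r \<inter> A)"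
proof -
  let ?K = "\<phi> ` (cball x r \<inter> A)" and ?O = "\<phi> ` (ball x r \<inter> A)"
  have "cball (\<phi> x) s \<subseteq> ?O"
  proof (rule ccontr)
    assume "\<not> cball (\<phi> x) s \<subseteq> ?O"
    moreover have "\<phi> x \<in> cball (\<phi> x) s \<inter> ?O"
      using centre r assms by auto
    ultimately obtain y where y: "y \<in> cball (\<phi> x) s" "y \<in> frontier ?O"
      using connected_Int_frontier[of "cball (\<phi> x) s" ?O] by blast
    have "closure ?O \<subseteq> ?K"
      using compact_image_cball compact_imp_closed by (intro closure_minimal) auto
    then have "y \<in> ?K" "y \<notin> ?O"
      using y open_image_ball by (auto simp: frontier_def interior_open)
    then obtain z where z: "z \<in> cball x r \<inter> A" "y = \<phi> z" by auto
    with \<open>y \<notin> ?O\<close> have "z \<notin> ball x r" by blast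
    have "dist x z \<le> L * dist (\<phi> x) (\<phi> z)"
      using bilipschitz_on_dist_le[OF bilipschitz] centre z(1) cball_subset_domain[of r] L r by auto
    also have "\<dots> \<le> L * s"
      using y z L by (intro mult_left_mono) auto
    finally show False
      using \<open>z \<notin> ball x r\<close> assms by (simp add: mult.commute)
  qed
  then show ?thesis by auto
qed

text \<open>Push into the chart, where \<open>\<phi> ` (cball x (5 * r) \<inter> A)\<close> lies in \<open>cball (\<phi> x) (30 * (r/3))\<close> and
  \<open>cball (\<phi> x) (r/3)\<close> lies in \<open>\<phi> ` (cball x r \<inter> A)\<close>; the constant is \<open>(L * 30 * L)^d \<le> 120^d\<close>.\<close>

lemma hausdorff_measure_cball_5_le:
  "hausdorff_measure d (cball x (5 * r) \<inter> A) \<le> ennreal (120 ^ d) * hausdorff_measure d (cball x r \<inter> A)"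
proof -
  let ?H = "hausdorff_measure d" and ?y = "\<phi> x"
  have dom: "cball x (5 * r) \<inter> A \<subseteq> ball x \<delta> \<inter> A" "cball x r \<inter> A \<subseteq> ball x \<delta> \<inter> A"
    using cball_subset_domain r by auto
  have "\<phi> ` (cball x (5 * r) \<inter> A) \<subseteq> cball ?y (30 * (r / 3))"
  proof clarify
    fix z assume z: "z \<in> cball x (5 * r)" "z \<in> A"
    have "dist ?y (\<phi> z) \<le> L * dist x z"
      using lipschitz_onD[OF lipschitz] centre z dom(1) r by auto
    also have "\<dots> \<le> 2 * (5 * r)"
      using L z r by (intro mult_mono) auto
    finally show "\<phi> z \<in> cball ?y (30 * (r / 3))" by simp
  qed
  then have "?H (\<phi> ` (cball x (5 * r) \<inter> A)) \<le> ennreal (30 ^ d) * ?H (cball ?y (r / 3))"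
    by (meson hausdorff_measure_mono hausdorff_measure_cball_scale order_trans zero_less_numeral)
  also have "?H (cball ?y (r / 3)) \<le> ?H (\<phi> ` (cball x r \<inter> A))"
    using L r by (intro hausdorff_measure_mono cball_subset_image_cball) auto
  also have "\<dots> \<le> ennreal (L ^ d) * ?H (cball x r \<inter> A)"
    using L lipschitz_on_subset[OF lipschitz dom(2)] by (intro hausdorff_measure_lipschitz_image) auto
  also have Ld: "ennreal (L ^ d) \<le> ennreal (2 ^ d)"
    using L by (intro ennreal_leI power_mono) auto
  finally have image_le: "?H (\<phi> ` (cball x (5 * r) \<inter> A))
      \<le> ennreal (30 ^ d) * (ennreal (2 ^ d) * ?H (cball x r \<inter> A))"
    by (simp add: mult_left_mono mult_right_mono)
  have "?H (cball x (5 * r) \<inter> A) \<le> ennreal (L ^ d) * ?H (\<phi> ` (cball x (5 * r) \<inter> A))"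
    using L by (intro hausdorff_measure_le_bilipschitz_image[OF bilipschitz _ dom(1)]) auto
  also have "\<dots> \<le> ennreal (2 ^ d) * (ennreal (30 ^ d) * (ennreal (2 ^ d) * ?H (cball x r \<inter> A)))"
    using image_le Ld by (intro mult_mono) auto
  also have "\<dots> = ennreal (2 ^ d * 30 ^ d * 2 ^ d) * ?H (cball x r \<inter> A)"
    by (simp add: ennreal_mult mult.assoc)
  also have "(2::real) ^ d * 30 ^ d * 2 ^ d = 120 ^ d"
    by (simp add: power_mult_distrib[symmetric])
  finally show ?thesis .
qed

lemma chart_cell:
  assumes "L < 1 + \<epsilon>" and "hausdorff_measure DIM('d) (A \<inter> sphere x r) = 0"
  shows "bilipschitz_on (1 + \<epsilon>) (cball x r \<inter> A) \<phi>"
    and "emeasure lebesgue (frontier (\<phi> ` (cball x r \<inter> A))) = 0"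
    and "cball (\<phi> x) (r / (1 + \<epsilon>)) \<subseteq> \<phi> ` (cball x r \<inter> A)"
proof -
  show "bilipschitz_on (1 + \<epsilon>) (cball x r \<inter> A) \<phi>"
    using bilipschitz_on_mono[OF bilipschitz] cball_subset_domain[of r] assms(1) L r by auto
  show "emeasure lebesgue (frontier (\<phi> ` (cball x r \<inter> A))) = 0"
    by (rule emeasure_frontier_image_cball[OF assms(2)])
  have "r / (1 + \<epsilon>) * L < r / (1 + \<epsilon>) * (1 + \<epsilon>)"
    using assms(1) L r by (intro mult_strict_left_mono) auto
  then have "r / (1 + \<epsilon>) * L < r"
    using assms(1) L by simp
  then show "cball (\<phi> x) (r / (1 + \<epsilon>)) \<subseteq> \<phi> ` (cball x r \<inter> A)"
    using assms(1) L r by (intro cball_subset_image_cball) auto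
qed

end

text \<open>The radius bound \<open>snd p \<le> 1\<close> is the one required by Vitali's covering lemma.\<close>

definition admissible_cell :: "real \<Rightarrow> 'p::heine_borel set \<Rightarrow> 'p \<times> real \<Rightarrow> ('p \<Rightarrow> 'd::euclidean_space) \<Rightarrow> bool"
  where "admissible_cell \<epsilon> A p \<phi> \<longleftrightarrow> snd p \<le> 1 \<and> snd p < \<epsilon> \<and>
           hausdorff_measure DIM('d) (A \<inter> sphere (fst p) (snd p)) = 0 \<and>
           (\<exists>L \<delta>. L < 1 + \<epsilon> \<and> bilipschitz_chart A \<phi> (fst p) L (snd p) \<delta>)"

lemma admissible_cell_properties:
  fixes \<phi> :: "'p::heine_borel \<Rightarrow> 'd::euclidean_space"
  assumes "admissible_cell \<epsilon> A p \<phi>"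
  shows "fst p \<in> A" "0 < snd p" "snd p \<le> 1" "snd p < \<epsilon>"
    and "bilipschitz_on (1 + \<epsilon>) (cball (fst p) (snd p) \<inter> A) \<phi>"
    and "emeasure lebesgue (frontier (\<phi> ` (cball (fst p) (snd p) \<inter> A))) = 0"
    and "cball (\<phi> (fst p)) (snd p / (1 + \<epsilon>)) \<subseteq> \<phi> ` (cball (fst p) (snd p) \<inter> A)"
    and "hausdorff_measure d (cball (fst p) (5 * snd p) \<inter> A)
           \<le> ennreal (120 ^ d) * hausdorff_measure d (cball (fst p) (snd p) \<inter> A)"
proof -
  obtain L \<delta> where "L < 1 + \<epsilon>" and chart: "bilipschitz_chart A \<phi> (fst p) L (snd p) \<delta>"
    using assms unfolding admissible_cell_def by blast
  then show "fst p \<in> A" "0 < snd p"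
    using bilipschitz_chart.centre bilipschitz_chart.r(1) by blast+
  show "snd p \<le> 1" "snd p < \<epsilon>"
    using assms unfolding admissible_cell_def by auto
  have "hausdorff_measure DIM('d) (A \<inter> sphere (fst p) (snd p)) = 0"
    using assms unfolding admissible_cell_def by blast
  note cell = bilipschitz_chart.chart_cell[OF chart \<open>L < 1 + \<epsilon>\<close> this]
  show "bilipschitz_on (1 + \<epsilon>) (cball (fst p) (snd p) \<inter> A) \<phi>"
    "emeasure lebesgue (frontier (\<phi> ` (cball (fst p) (snd p) \<inter> A))) = 0"
    "cball (\<phi> (fst p)) (snd p / (1 + \<epsilon>)) \<subseteq> \<phi> ` (cball (fst p) (snd p) \<inter> A)"
    by (fact cell)+
  show "hausdorff_measure d (cball (fst p) (5 * snd p) \<inter> A)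
      \<le> ennreal (120 ^ d) * hausdorff_measure d (cball (fst p) (snd p) \<inter> A)"
    by (rule bilipschitz_chart.hausdorff_measure_cball_5_le[OF chart])
qed

lemma exists_admissible_cell:
  fixes A :: "'p::euclidean_space set"
  assumes x: "bi_lipschitz_point TYPE('d::euclidean_space) A x"
    and A: "closed A" "hausdorff_measure DIM('d) A < \<infinity>" and "0 < \<epsilon>" "0 < b"
  shows "\<exists>r<b. \<exists>\<phi> :: 'p \<Rightarrow> 'd. admissible_cell \<epsilon> A (x, r) \<phi>"
proof -
  define L where "L = 1 + min (\<epsilon> / 2) 1"
  have L: "1 \<le> L" "L \<le> 2" "L < 1 + \<epsilon>"
    using \<open>0 < \<epsilon>\<close> by (auto simp: L_def)
  have "0 < min (\<epsilon> / 2) 1"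
    using \<open>0 < \<epsilon>\<close> by simp
  then obtain \<delta> and \<phi> :: "'p \<Rightarrow> 'd" where \<delta>: "0 < \<delta>" "bilipschitz_on L (ball x \<delta> \<inter> A) \<phi>"
    "open (\<phi> ` (ball x \<delta> \<inter> A))"
    using x unfolding bi_lipschitz_point_def L_def by blast
  define b' where "b' = min (min b \<epsilon>) (min 1 (\<delta> / 5))"
  obtain r where r: "0 < r" "r < b'" "hausdorff_measure DIM('d) (A \<inter> sphere x r) = 0"
    using exists_radius_hausdorff_measure_sphere_zero[OF A, of b' x] \<open>0 < b\<close> \<open>0 < \<epsilon>\<close> \<delta>(1)
    by (auto simp: b'_def)
  have "bilipschitz_chart A \<phi> x L r \<delta>"
    using A(1) x L r \<delta> by unfold_locales (auto simp: bi_lipschitz_point_def b'_def)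
  then have "admissible_cell \<epsilon> A (x, r) \<phi>"
    using L r by (auto simp: admissible_cell_def b'_def)
  moreover have "r < b"
    using r by (simp add: b'_def)
  ultimately show ?thesis
    by blast
qed

section \<open>Vitali exhaustion\<close>

lemma ennreal_suminf_tail_less:
  fixes f :: "nat \<Rightarrow> ennreal"
  assumes "(\<Sum>n. f n) \<noteq> \<infinity>" "0 < \<eta>"
  shows "\<exists>N. (\<Sum>i. f (i + N)) < ennreal \<eta>"
proof -
  have f_fin: "f n \<noteq> \<infinity>" for n
    using assms(1) ennreal_suminf_lessD[of f \<infinity> n] by (simp add: less_top)
  then have f_eq: "f n = ennreal (enn2real (f n))" for n
    by (simp add: less_top)
  then have "summable (\<lambda>n. enn2real (f n))"
    using assms(1) by (intro summable_suminf_not_top) (auto simp: comp_def)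
  then obtain N where N: "norm (\<Sum>i. enn2real (f (i + N))) < \<eta>"
    using suminf_exist_split[of \<eta>] assms(2) by blast
  have "(\<Sum>i. f (i + N)) = ennreal (\<Sum>i. enn2real (f (i + N)))"
    by (subst f_eq) (intro suminf_ennreal2 summable_ignore_initial_segment \<open>summable _\<close>, simp)
  then show ?thesis
    using N assms(2) by (intro exI[of _ N]) (simp add: ennreal_lessI abs_less_iff)
qed

text \<open>A point \<open>z\<close> of \<open>B\<close> missed by the finitely many closed cells of \<open>F\<close> has a small ball \<open>cball z r\<close> of
  the fine cover avoiding them; the Vitali ball it meets lies outside \<open>F\<close>, and its 5-fold
  enlargement contains \<open>z\<close>.\<close>

lemma vitali_remainder_subset_enlarged:
  fixes K C :: "('a::metric_space \<times> real) set"
  assumes fine: "\<And>z e. z \<in> B \<Longrightarrow> 0 < e \<Longrightarrow> \<exists>r<e. (z, r) \<in> K"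
    and K_pos: "\<And>p. p \<in> K \<Longrightarrow> 0 < snd p"
    and vitali: "\<And>p. p \<in> K \<Longrightarrow> \<exists>q. q \<in> C \<and>
        \<not> disjnt (cball (fst p) (snd p)) (cball (fst q) (snd q)) \<and>
        cball (fst p) (snd p) \<subseteq> ball (fst q) (5 * snd q)"
    and "finite F" "B \<subseteq> A"
  shows "B - (\<Union>p\<in>F. cball (fst p) (snd p) \<inter> A) \<subseteq> (\<Union>p\<in>C - F. cball (fst p) (5 * snd p) \<inter> A)"
proof
  fix z assume z: "z \<in> B - (\<Union>p\<in>F. cball (fst p) (snd p) \<inter> A)"
  define W where "W = (\<Union>p\<in>F. cball (fst p) (snd p))"
  have "open (- W)"
    unfolding W_def using \<open>finite F\<close> by (intro open_Compl closed_UN) auto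
  moreover have "z \<in> - W"
    using z \<open>B \<subseteq> A\<close> by (auto simp: W_def)
  ultimately
  obtain e where "0 < e" "ball z e \<subseteq> - W"
    using open_contains_ball[of "- W"] by blast
  then obtain r where r: "r < e" "(z, r) \<in> K"
    using fine[of z e] z by blast
  then obtain q where q: "q \<in> C" "\<not> disjnt (cball z r) (cball (fst q) (snd q))"
    "cball z r \<subseteq> ball (fst q) (5 * snd q)"
    using vitali[OF r(2)] unfolding fst_conv snd_conv by blast
  have "cball z r \<subseteq> ball z e"
    using r(1) by (intro subsetI) simp
  then have "cball z r \<subseteq> - W"
    using \<open>ball z e \<subseteq> - W\<close> by blast
  then have "q \<notin> F"
    using q(2) by (auto simp: W_def disjnt_def)
  moreover have "z \<in> cball z r"
    using K_pos[OF r(2)] by simp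
  then have "z \<in> ball (fst q) (5 * snd q)"
    using q(3) by blast
  then have "z \<in> cball (fst q) (5 * snd q) \<inter> A"
    using z \<open>B \<subseteq> A\<close> by auto
  ultimately show "z \<in> (\<Union>p\<in>C - F. cball (fst p) (5 * snd p) \<inter> A)"
    using q(1) by blast
qed

lemma bij_betw_diff_image_lessThan_subset:
  fixes e :: "nat \<Rightarrow> 'a"
  assumes "bij_betw e UNIV C"
  shows "C - e ` {..<N} \<subseteq> range (\<lambda>i. e (i + N))"
proof
  fix p assume p: "p \<in> C - e ` {..<N}"
  then obtain n where "p = e n"
    using assms unfolding bij_betw_def by auto
  moreover from this have "N \<le> n"
    using p by (auto simp: not_le[symmetric])
  ultimately have "p = e (n - N + N)"
    by simp
  then show "p \<in> range (\<lambda>i. e (i + N))"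
    by blast
qed

lemma hausdorff_measure_suminf_disjoint_cells_le:
  fixes e :: "nat \<Rightarrow> 'a::heine_borel \<times> real"
  assumes "0 < d" "closed A" "inj e"
    and "pairwise (\<lambda>p q. disjnt (cball (fst p) (snd p)) (cball (fst q) (snd q))) (range e)"
  shows "(\<Sum>n. hausdorff_measure d (cball (fst (e n)) (snd (e n)) \<inter> A)) \<le> hausdorff_measure d A"
proof (rule hausdorff_measure_suminf_disjoint_compact_le)
  show "disjoint_family (\<lambda>n. cball (fst (e n)) (snd (e n)) \<inter> A)"
    using assms(3,4) unfolding disjoint_family_on_def pairwise_def disjnt_def
    by (metis (no_types, lifting) Int_Un_eq(4) Int_assoc Int_empty_left inf_commute inj_eq rangeI)
qed (use assms(1,2) in \<open>auto intro: compact_Int_closed\<close>)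

text \<open>Disjointness and \<open>H\<^sub>d(A) < \<infinity>\<close> make the measures of the cells summable; by doubling, the enlarged
  cells beyond the first \<open>N\<close> then have small total measure, and they cover what the first \<open>N\<close> miss.\<close>

lemma finite_cells_remainder_less:
  fixes C :: "('a::heine_borel \<times> real) set"
  assumes d: "0 < d" and A: "closed A" "hausdorff_measure d A < \<infinity>" and "countable C"
    and disj: "pairwise (\<lambda>p q. disjnt (cball (fst p) (snd p)) (cball (fst q) (snd q))) C"
    and doubling: "\<And>p. p \<in> C \<Longrightarrow> hausdorff_measure d (cball (fst p) (5 * snd p) \<inter> A)
                                  \<le> ennreal c * hausdorff_measure d (cball (fst p) (snd p) \<inter> A)"
    and remainder: "\<And>F. finite F \<Longrightarrow> B - (\<Union>p\<in>F. cball (fst p) (snd p) \<inter> A)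
                                       \<subseteq> (\<Union>p\<in>C - F. cball (fst p) (5 * snd p) \<inter> A)"
    and "0 < c" "0 < \<gamma>"
  shows "\<exists>F\<subseteq>C. finite F \<and> hausdorff_measure d (B - (\<Union>p\<in>F. cball (fst p) (snd p) \<inter> A)) < ennreal \<gamma>"
proof (cases "finite C")
  case True
  then have remainder_empty: "B - (\<Union>p\<in>C. cball (fst p) (snd p) \<inter> A) = {}"
    using remainder[of C] by auto
  have "hausdorff_measure d (B - (\<Union>p\<in>C. cball (fst p) (snd p) \<inter> A)) = 0"
    unfolding remainder_empty by (rule hausdorff_measure_empty[OF d])
  then show ?thesis
    using True \<open>0 < \<gamma>\<close> by (intro exI[of _ C]) auto
next
  case False
  let ?H = "hausdorff_measure d" and ?Q = "\<lambda>p. cball (fst p) (snd p) \<inter> A"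
    and ?Q5 = "\<lambda>p. cball (fst p) (5 * snd p) \<inter> A"
  obtain e :: "nat \<Rightarrow> 'a \<times> real" where e: "bij_betw e UNIV C"
    using bij_betw_from_nat_into[OF \<open>countable C\<close> False] by blast
  then have eC: "e n \<in> C" for n
    by (auto simp: bij_betw_def)
  have "(\<Sum>n. ?H (?Q (e n))) \<le> ?H A"
    using e disj d A(1) by (intro hausdorff_measure_suminf_disjoint_cells_le) (auto simp: bij_betw_def)
  then have sum_finite: "(\<Sum>n. ?H (?Q (e n))) \<noteq> \<infinity>"
    using A(2) by (auto simp: top_unique)
  have "0 < \<gamma> / c"
    using \<open>0 < \<gamma>\<close> \<open>0 < c\<close> by simp
  then obtain N where N: "(\<Sum>i. ?H (?Q (e (i + N)))) < ennreal (\<gamma> / c)"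
    using ennreal_suminf_tail_less[OF sum_finite] by blast
  have "B - (\<Union>p\<in>e ` {..<N}. ?Q p) \<subseteq> (\<Union>p\<in>C - e ` {..<N}. ?Q5 p)"
    by (rule remainder) simp
  also have "\<dots> \<subseteq> (\<Union>p\<in>range (\<lambda>i. e (i + N)). ?Q5 p)"
    by (rule UN_mono[OF bij_betw_diff_image_lessThan_subset[OF e]]) simp
  finally have "?H (B - (\<Union>p\<in>e ` {..<N}. ?Q p)) \<le> ?H (\<Union>i. ?Q5 (e (i + N)))"
    by (intro hausdorff_measure_mono) (simp only: image_image)
  also have "\<dots> \<le> (\<Sum>i. ?H (?Q5 (e (i + N))))"
    by (rule hausdorff_measure_countable_subadditive)
  also have "\<dots> \<le> (\<Sum>i. ennreal c * ?H (?Q (e (i + N))))"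
    using eC by (intro suminf_le allI doubling) auto
  also have "\<dots> < ennreal c * ennreal (\<gamma> / c)"
    using N \<open>0 < c\<close> by (simp add: ennreal_mult_strict_left_mono)
  also have "\<dots> = ennreal \<gamma>"
    using \<open>0 < c\<close> \<open>0 < \<gamma>\<close> by (simp add: ennreal_mult[symmetric])
  finally show ?thesis
    using eC by (intro exI[of _ "e ` {..<N}"]) auto
qed

lemma vitali_exhaustion_hausdorff_measure:
  fixes A B :: "'a::euclidean_space set" and K :: "('a \<times> real) set"
  assumes d: "0 < d" and A: "closed A" "hausdorff_measure d A < \<infinity>" and "B \<subseteq> A"
    and K_radius: "\<And>p. p \<in> K \<Longrightarrow> 0 < snd p \<and> snd p \<le> 1"
    and fine: "\<And>z e. z \<in> B \<Longrightarrow> 0 < e \<Longrightarrow> \<exists>r<e. (z, r) \<in> K"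
    and doubling: "\<And>p. p \<in> K \<Longrightarrow> hausdorff_measure d (cball (fst p) (5 * snd p) \<inter> A)
                                  \<le> ennreal c * hausdorff_measure d (cball (fst p) (snd p) \<inter> A)"
    and "0 < c"
  obtains C where "C \<subseteq> K"
    and "pairwise (\<lambda>p q. disjnt (cball (fst p) (snd p)) (cball (fst q) (snd q))) C"
    and "\<And>\<gamma>. 0 < \<gamma> \<Longrightarrow> \<exists>F\<subseteq>C. finite F \<and>
           hausdorff_measure d (B - (\<Union>p\<in>F. cball (fst p) (snd p) \<inter> A)) < ennreal \<gamma>"
    and "hausdorff_measure d (B - (\<Union>p\<in>C. cball (fst p) (snd p) \<inter> A)) = 0"
proof -
  let ?H = "hausdorff_measure d" and ?Q = "\<lambda>p. cball (fst p) (snd p) \<inter> A"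
  obtain C where C: "countable C" "C \<subseteq> K"
    and disj: "pairwise (\<lambda>p q. disjnt (cball (fst p) (snd p)) (cball (fst q) (snd q))) C"
    and vitali: "\<And>p. p \<in> K \<Longrightarrow> \<exists>q. q \<in> C \<and>
        \<not> disjnt (cball (fst p) (snd p)) (cball (fst q) (snd q)) \<and>
        cball (fst p) (snd p) \<subseteq> ball (fst q) (5 * snd q)"
    using Vitali_covering_lemma_cballs_balls[of K snd 1 fst] K_radius by blast
  have K_pos: "\<And>p. p \<in> K \<Longrightarrow> 0 < snd p"
    using K_radius by blast
  have approx: "\<exists>F\<subseteq>C. finite F \<and> ?H (B - (\<Union>p\<in>F. ?Q p)) < ennreal \<gamma>" if "0 < \<gamma>" for \<gamma>
    using d A C(1) disj doubling C(2) vitali_remainder_subset_enlarged[OF fine K_pos vitali _ \<open>B \<subseteq> A\<close>]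
      \<open>0 < c\<close> that
    by (intro finite_cells_remainder_less) auto
  have "?H (B - (\<Union>p\<in>C. ?Q p)) \<le> 0"
  proof (rule ennreal_le_epsilon)
    fix \<gamma> :: real assume "0 < \<gamma>"
    then obtain F where F: "F \<subseteq> C" "?H (B - (\<Union>p\<in>F. ?Q p)) < ennreal \<gamma>"
      using approx by blast
    have "?H (B - (\<Union>p\<in>C. ?Q p)) \<le> ?H (B - (\<Union>p\<in>F. ?Q p))"
      using F(1) by (intro hausdorff_measure_mono) blast
    then show "?H (B - (\<Union>p\<in>C. ?Q p)) \<le> 0 + ennreal \<gamma>"
      using F(2) by simp
  qed
  then show thesis
    using that C(2) disj approx by simp
qed

lemma bilipschitz_cell_decomposition:
  fixes A B :: "'p::euclidean_space set"
  assumes A: "closed A" "hausdorff_measure DIM('d::euclidean_space) A < \<infinity>"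
    and B: "B \<subseteq> A_bi TYPE('d) A" and "0 < \<epsilon>"
  shows "\<exists>(X :: ('p \<times> real) set) (\<phi> :: 'p \<times> real \<Rightarrow> 'p \<Rightarrow> 'd).
           (\<forall>a\<in>X. \<forall>b\<in>X. a \<noteq> b \<longrightarrow> (cball (fst a) (snd a) \<inter> A) \<inter> (cball (fst b) (snd b) \<inter> A) = {})
         \<and> hausdorff_measure DIM('d) (B - (\<Union>a\<in>X. cball (fst a) (snd a) \<inter> A)) = 0
         \<and> (\<forall>a\<in>X. fst a \<in> A \<and> 0 < snd a \<and> snd a < \<epsilon>
               \<and> bilipschitz_on (1 + \<epsilon>) (cball (fst a) (snd a) \<inter> A) (\<phi> a)
               \<and> emeasure lebesgue (frontier (\<phi> a ` (cball (fst a) (snd a) \<inter> A))) = 0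
               \<and> cball (\<phi> a (fst a)) (snd a / (1 + \<epsilon>)) \<subseteq> \<phi> a ` (cball (fst a) (snd a) \<inter> A))
         \<and> (\<forall>\<gamma>>0. \<exists>F\<subseteq>X. finite F \<and>
               hausdorff_measure DIM('d) (B - (\<Union>a\<in>F. cball (fst a) (snd a) \<inter> A)) < ennreal \<gamma>)"
proof -
  let ?H = "hausdorff_measure DIM('d) :: 'p set \<Rightarrow> ennreal"
  have "B \<subseteq> A" and B_bi: "\<And>x. x \<in> B \<Longrightarrow> bi_lipschitz_point TYPE('d) A x"
    using B by (auto simp: A_bi_def)
  define K where "K = {p. fst p \<in> B \<and> (\<exists>\<phi> :: 'p \<Rightarrow> 'd. admissible_cell \<epsilon> A p \<phi>)}"
  define \<Phi> where "\<Phi> p = (SOME \<phi> :: 'p \<Rightarrow> 'd. admissible_cell \<epsilon> A p \<phi>)" for p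
  have \<Phi>: "admissible_cell \<epsilon> A p (\<Phi> p)" if p: "p \<in> K" for p
  proof -
    obtain \<phi> :: "'p \<Rightarrow> 'd" where "admissible_cell \<epsilon> A p \<phi>"
      using p unfolding K_def by blast
    then show ?thesis
      unfolding \<Phi>_def by (rule someI[where P = "admissible_cell \<epsilon> A p"])
  qed
  note cell = admissible_cell_properties[OF \<Phi>]
  have fine: "\<exists>r<e. (x, r) \<in> K" if x: "x \<in> B" and e: "0 < e" for x e
    using exists_admissible_cell[OF B_bi[OF x] A \<open>0 < \<epsilon>\<close> e] x unfolding K_def by auto
  obtain C where "C \<subseteq> K"
    and disj: "pairwise (\<lambda>p q. disjnt (cball (fst p) (snd p)) (cball (fst q) (snd q))) C"
    and approx: "\<And>\<gamma>. 0 < \<gamma> \<Longrightarrow> \<exists>F\<subseteq>C. finite F \<and> ?H (B - (\<Union>p\<in>F. cball (fst p) (snd p) \<inter> A)) < ennreal \<gamma>"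
    and null: "?H (B - (\<Union>p\<in>C. cball (fst p) (snd p) \<inter> A)) = 0"
    using vitali_exhaustion_hausdorff_measure[OF _ A \<open>B \<subseteq> A\<close> _ fine cell(8)] cell(2,3) by auto
  have cells_disjoint: "cball (fst p) (snd p) \<inter> A \<inter> (cball (fst q) (snd q) \<inter> A) = {}"
    if "p \<in> C" "q \<in> C" "p \<noteq> q" for p q
    using disj that unfolding pairwise_def disjnt_def by blast
  have "p \<in> K" if "p \<in> C" for p
    using that \<open>C \<subseteq> K\<close> by blast
  note cell_C = cell[OF this]
  show ?thesis
    by (rule exI[of _ C], rule exI[of _ \<Phi>], intro conjI ballI allI impI)
      (use cells_disjoint null cell_C approx in auto)
qed

theorem lemma2:
  fixes A B :: "'p::euclidean_space set"
  assumes "compact A"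
    and "hausdorff_measure DIM('d::euclidean_space) A < \<infinity>"
    and "B \<subseteq> A - closure (A_bi_c TYPE('d) A)"
    and "B \<noteq> {}"
    and "openin (top_of_set A) B"
  shows "\<forall>\<epsilon>>0. \<exists>(X :: ('p \<times> real) set) (\<phi> :: 'p \<times> real \<Rightarrow> 'p \<Rightarrow> 'd).
           (\<forall>a\<in>X. \<forall>b\<in>X. a \<noteq> b \<longrightarrow> (cball (fst a) (snd a) \<inter> A) \<inter> (cball (fst b) (snd b) \<inter> A) = {})
         \<and> hausdorff_measure DIM('d) (B - (\<Union>a\<in>X. cball (fst a) (snd a) \<inter> A)) = 0
         \<and> (\<forall>a\<in>X. fst a \<in> A \<and> 0 < snd a \<and> snd a < \<epsilon>
               \<and> bilipschitz_on (1 + \<epsilon>) (cball (fst a) (snd a) \<inter> A) (\<phi> a)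
               \<and> emeasure lebesgue (frontier (\<phi> a ` (cball (fst a) (snd a) \<inter> A))) = 0
               \<and> cball (\<phi> a (fst a)) (snd a / (1 + \<epsilon>)) \<subseteq> \<phi> a ` (cball (fst a) (snd a) \<inter> A))
         \<and> (\<forall>\<gamma>>0. \<exists>F\<subseteq>X. finite F \<and>
               hausdorff_measure DIM('d) (B - (\<Union>a\<in>F. cball (fst a) (snd a) \<inter> A)) < ennreal \<gamma>)"
proof -
  have "B \<subseteq> A_bi TYPE('d) A"
    using assms(3) closure_subset[of "A_bi_c TYPE('d) A"] unfolding A_bi_c_def by blast
  then show ?thesis
    by (intro allI impI bilipschitz_cell_decomposition[OF compact_imp_closed[OF assms(1)] assms(2)])
qed

end
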